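(* Let $$A=\begin{bmatrix} \lambda_1&a_{12}\\ 0&\lambda_2\end{bmatrix},\quad B=\begin{bmatrix} \mu_1&b_{12}\\ 0&\mu_2\end{bmatrix},\quad C=\begin{bmatrix} c_{11}&c_{12}\\ c_{21}&c_{22}\end{bmatrix}$$ and let $f(x,y)$ be such that $f\{A,B^T\}(C)$ is well defined. Then $$f\{A,B^T\}(C)= \begin{bmatrix} f(\lambda_1, \mu_1) & f(\lambda_1, \mu_2) \\ f(\lambda_2, \mu_1) & f(\lambda_2, \mu_2) \end{bmatrix} \circ C +\begin{bmatrix} c_{21}a_{12}D_x[\lambda_1, \lambda_2]f(x,\mu_1) & \Delta\\ 0& c_{21}b_{12}D_y[\mu_1,\mu_2]f(\lambda_2,y)\end{bmatrix},$$ where $\circ$ denotes the Hadamard (entrywise) product and $$\Delta:= c_{22}a_{12}D_x[\lambda_1, \lambda_2]f(x,\mu_2)+c_{11}b_{12}D_y[\mu_1,\mu_2]f(\lambda_1,y) +c_{21}a_{12}b_{12}D_{x}[\lambda_1,\lambda_2]D_{y}[\mu_1,\mu_2]f(x,y).$$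
   Context: For square matrices $A\in\mathbb C^{m\times m}$, $B\in\mathbb C^{n\times n}$ with spectra $\Lambda_A,\Lambda_B$ and $f(x,y)$ analytic in an open neighborhood of $\Lambda_A\times\Lambda_B$, the bivariate matrix function is $f\{A,B^T\}(C)=\oint_{\Gamma_A}\oint_{\Gamma_B} f(x,y)(xI-A)^{-1}C(yI-B)^{-1}\,dx\,dy$ with $\Gamma_A,\Gamma_B$ closed contours enclosing $\Lambda_A,\Lambda_B$. The bivariate divided differences are $D_x[x_1,x_2]f(x,y):=\frac{f(x_2, y)-f(x_1,y)}{x_2-x_1}$ (a function of $y$) and $D_y[y_1,y_2]f(x,y):=\frac{f(x,y_2)-f(x, y_1)}{y_2-y_1}$ (a function of $x$), with the usual derivative interpretation when the nodes coincide. *)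

theory Defs
  imports "HOL-Complex_Analysis.Complex_Analysis"
begin

text \<open>2x2 complex matrices, rows and columns indexed by the numeral type 2 (indices 1, 2).\<close>

definition mat2 :: "complex \<Rightarrow> complex \<Rightarrow> complex \<Rightarrow> complex \<Rightarrow> complex^2^2" where
  "mat2 a b c d = (\<chi> i j. if i = 1 then (if j = 1 then a else b) else (if j = 1 then c else d))"

definition minv :: "complex^'n^'n \<Rightarrow> complex^'n^'n" where
  "minv M = (SOME M'. M ** M' = mat 1 \<and> M' ** M = mat 1)"

definition mspectrum :: "complex^'n^'n \<Rightarrow> complex set" where
  "mspectrum M = {z. \<not> invertible (mat z - M)}"

definition hadamard :: "complex^'n^'m \<Rightarrow> complex^'n^'m \<Rightarrow> complex^'n^'m" where
  "hadamard M N = (\<chi> i j. M $ i $ j * N $ i $ j)"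

definition divdiff :: "(complex \<Rightarrow> complex) \<Rightarrow> complex \<Rightarrow> complex \<Rightarrow> complex" where
  "divdiff g a b = (if a = b then deriv g a else (g b - g a) / (b - a))"

definition Dx :: "(complex \<Rightarrow> complex \<Rightarrow> complex) \<Rightarrow> complex \<Rightarrow> complex \<Rightarrow> complex \<Rightarrow> complex" where
  "Dx f x1 x2 y = divdiff (\<lambda>x. f x y) x1 x2"

definition Dy :: "(complex \<Rightarrow> complex \<Rightarrow> complex) \<Rightarrow> complex \<Rightarrow> complex \<Rightarrow> complex \<Rightarrow> complex" where
  "Dy f y1 y2 x = divdiff (\<lambda>y. f x y) y1 y2"

text \<open>f analytic (holomorphic in two variables) on an open set U of C^2:
  continuous and separately holomorphic (Osgood).\<close>
definition analytic2_on :: "(complex \<Rightarrow> complex \<Rightarrow> complex) \<Rightarrow> (complex \<times> complex) set \<Rightarrow> bool" where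
  "analytic2_on f U \<longleftrightarrow> open U \<and> continuous_on U (\<lambda>(x, y). f x y) \<and>
     (\<forall>(x, y) \<in> U. (\<lambda>s. f s y) field_differentiable at x \<and> (\<lambda>t. f x t) field_differentiable at y)"

definition encloses :: "(real \<Rightarrow> complex) \<Rightarrow> complex set \<Rightarrow> complex set \<Rightarrow> bool" where
  "encloses \<gamma> S U \<longleftrightarrow> valid_path \<gamma> \<and> pathfinish \<gamma> = pathstart \<gamma> \<and>
     path_image \<gamma> \<subseteq> U - S \<and> (\<forall>z\<in>S. winding_number \<gamma> z = 1) \<and>
     (\<forall>z. z \<notin> U \<longrightarrow> winding_number \<gamma> z = 0)"

definition bivar_fun ::
  "(complex \<Rightarrow> complex \<Rightarrow> complex) \<Rightarrow> complex^'m^'m \<Rightarrow> complex^'n^'n \<Rightarrow> complex^'n^'m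
     \<Rightarrow> (real \<Rightarrow> complex) \<Rightarrow> (real \<Rightarrow> complex) \<Rightarrow> complex^'n^'m" where
  "bivar_fun f A B C gA gB =
     (\<chi> i j. (1 / (2 * pi * \<i>))^2 *
        contour_integral gA (\<lambda>x. contour_integral gB
          (\<lambda>y. f x y * (minv (mat x - A) ** C ** minv (mat y - B)) $ i $ j)))"

end

theory Submission
  imports Defs
begin

text \<open>For an upper triangular \<open>T = [[p, s], [0, q]]\<close> the resolvent \<open>(wI - T)\<^sup>-\<^sup>1\<close> has
  the entries \<open>1/(w-p)\<close>, \<open>s/((w-p)(w-q))\<close> and \<open>1/(w-q)\<close>. By Cauchy's integral formula,
  integrating a holomorphic \<open>h\<close> against these kernels yields, up to the factor \<open>2\<pi>i\<close>,
  \<open>h(p)\<close>, \<open>s h[p,q]\<close> and \<open>h(q)\<close>, i.e. the matrix \<open>h(T)\<close>. Integrating first in \<open>y\<close> for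
  fixed \<open>x\<close> and then in \<open>x\<close>, the double integral collapses to values and divided differences
  of \<open>f\<close> and of \<open>D\<^sub>y[\<mu>\<^sub>1,\<mu>\<^sub>2]f\<close>. The only further analytic input is that
  \<open>x \<mapsto> D\<^sub>y[\<mu>\<^sub>1,\<mu>\<^sub>2]f(x,y)\<close> is again holomorphic; for \<open>\<mu>\<^sub>1 = \<mu>\<^sub>2\<close> this follows from
  the Cauchy integral for the derivative and Morera's theorem.\<close>

lemma mat2_nth [simp]:
  "mat2 a b c d $ 1 $ 1 = a" "mat2 a b c d $ 1 $ 2 = b" "mat2 a b c d $ 2 $ 1 = c" "mat2 a b c d $ 2 $ 2 = d"
  by (simp_all add: mat2_def)

lemma mat2_mult:
  "mat2 a b c d ** mat2 a' b' c' d' = mat2 (a*a' + b*c') (a*b' + b*d') (c*a' + d*c') (c*b' + d*d')"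
  unfolding vec_eq_iff forall_2 matrix_matrix_mult_def sum_2 by simp

lemma mat_minus_mat2: "mat z - mat2 a b c d = mat2 (z - a) (- b) (- c) (z - d)"
  unfolding vec_eq_iff forall_2 by (simp add: mat_def)

lemma mat_eq_mat2: "(mat z :: complex^2^2) = mat2 z 0 0 z"
  unfolding vec_eq_iff forall_2 by (simp add: mat_def)

lemma minv_eqI:
  fixes M N :: "complex^'n^'n"
  assumes "M ** N = mat 1" and "N ** M = mat 1"
  shows "minv M = N"
proof -
  have "M ** minv M = mat 1 \<and> minv M ** M = mat 1"
    unfolding minv_def by (rule someI[of _ N]) (use assms in blast)
  then have "minv M = (minv M ** M) ** N"
    by (metis assms(1) matrix_mul_assoc matrix_mul_rid)
  also have "\<dots> = N"
    using \<open>M ** minv M = mat 1 \<and> minv M ** M = mat 1\<close> by (simp add: matrix_mul_lid)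
  finally show ?thesis .
qed

lemma minv_mat_minus_upper_triangular:
  assumes "z \<noteq> p" and "z \<noteq> q"
  shows "minv (mat z - mat2 p s 0 q) = mat2 (1 / (z - p)) (s / ((z - p) * (z - q))) 0 (1 / (z - q))"
proof -
  from assms have "z - p \<noteq> 0" and "z - q \<noteq> 0" by simp_all
  then show ?thesis
    unfolding mat_minus_mat2 by (intro minv_eqI) (simp_all add: mat2_mult mat_eq_mat2 divide_simps)
qed

lemma mspectrum_upper_triangular: "mspectrum (mat2 p s 0 q) = {p, q}"
  unfolding mspectrum_def invertible_det_nz mat_minus_mat2 det_2 by auto

lemma divdiff_const [simp]: "divdiff (\<lambda>x. c) a b = 0"
  by (simp add: divdiff_def)

lemma divdiff_cmult:
  assumes "h field_differentiable at a"
  shows "divdiff (\<lambda>x. c * h x) a b = c * divdiff h a b"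
  using assms by (cases "a = b") (simp_all add: divdiff_def right_diff_distrib)

lemma encloses_subset: "encloses \<gamma> S U \<Longrightarrow> S \<subseteq> U"
  unfolding encloses_def by force

lemma Cauchy_integral_formula_encloses:
  assumes "open U" and "h holomorphic_on U" and "encloses \<gamma> S U" and "a \<in> S"
  shows "((\<lambda>w. h w / (w - a)) has_contour_integral 2 * pi * \<i> * h a) \<gamma>"
proof -
  have "a \<in> U" using encloses_subset[OF assms(3)] assms(4) by blast
  with assms show ?thesis
    using Cauchy_integral_formula_global[of U h a \<gamma>] unfolding encloses_def by force
qed

lemma has_contour_integral_inverse_product_zero:
  assumes "open U" and "encloses \<gamma> S U" and "a \<in> S" and "b \<in> S"
  shows "((\<lambda>w. 1 / ((w - a) * (w - b))) has_contour_integral 0) \<gamma>"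
proof (cases "a = b")
  case True
  have "((\<lambda>w. 1 / ((w - a) * (w - a))) has_contour_integral 0) \<gamma>"
  proof (rule Cauchy_theorem_primitive[where S = "- {a}" and f = "\<lambda>w. - 1 / (w - a)"])
    show "((\<lambda>w. - 1 / (w - a)) has_field_derivative 1 / ((x - a) * (x - a))) (at x within - {a})"
      if "x \<in> - {a}" for x
      using that by (auto intro!: derivative_eq_intros simp: field_simps)
  qed (use assms in \<open>auto simp: encloses_def\<close>)
  with True show ?thesis by simp
next
  case False
  have "((\<lambda>w. 1 / (w - c)) has_contour_integral 2 * pi * \<i>) \<gamma>" if "c \<in> S" for c
    using Cauchy_integral_formula_encloses[OF assms(1) _ assms(2) that, of "\<lambda>_. 1"] by simp
  then have "((\<lambda>w. 1 / (b - a) * (1 / (w - b) - 1 / (w - a)))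
               has_contour_integral 1 / (b - a) * (2 * pi * \<i> - 2 * pi * \<i>)) \<gamma>"
    using assms(3,4) by (intro has_contour_integral_lmul has_contour_integral_diff)
  then have "((\<lambda>w. 1 / (b - a) * (1 / (w - b) - 1 / (w - a))) has_contour_integral 0) \<gamma>"
    by simp
  then show ?thesis
  proof (rule has_contour_integral_eq)
    fix w assume "w \<in> path_image \<gamma>"
    with assms have "w \<noteq> a" and "w \<noteq> b" by (auto simp: encloses_def)
    with False show "1 / (b - a) * (1 / (w - b) - 1 / (w - a)) = 1 / ((w - a) * (w - b))"
      by (simp add: field_simps)
  qed
qed

lemma Cauchy_integral_formula_divdiff:
  assumes "open U" and "h holomorphic_on U" and "encloses \<gamma> S U" and "a \<in> S" and "b \<in> S"
  shows "((\<lambda>w. h w / ((w - a) * (w - b))) has_contour_integral 2 * pi * \<i> * divdiff h a b) \<gamma>"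
proof -
  define q where "q = (\<lambda>z. if z = a then deriv h a else (h z - h a) / (z - a))"
  have "q holomorphic_on U"
    unfolding q_def using assms(2,1) by (rule pole_lemma_open)
  then have "((\<lambda>w. q w / (w - b) + h a * (1 / ((w - a) * (w - b))))
               has_contour_integral 2 * pi * \<i> * q b + h a * 0) \<gamma>"
    using assms
    by (intro has_contour_integral_add has_contour_integral_lmul
          Cauchy_integral_formula_encloses has_contour_integral_inverse_product_zero)
  moreover have "q b = divdiff h a b"
    unfolding q_def divdiff_def by simp
  ultimately have "((\<lambda>w. q w / (w - b) + h a * (1 / ((w - a) * (w - b))))
                     has_contour_integral 2 * pi * \<i> * divdiff h a b) \<gamma>"
    by simp
  then show ?thesis
  proof (rule has_contour_integral_eq)
    fix w assume "w \<in> path_image \<gamma>"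
    with assms have "w - a \<noteq> 0" and "w - b \<noteq> 0" by (auto simp: encloses_def)
    then show "q w / (w - b) + h a * (1 / ((w - a) * (w - b))) = h w / ((w - a) * (w - b))"
      by (simp add: q_def divide_simps)
  qed
qed

text \<open>\<^term>\<open>upper_tri_fun h p s q\<close> is the matrix function \<open>h(T)\<close> of \<open>T = mat2 p s 0 q\<close>.\<close>

definition upper_tri_fun :: "(complex \<Rightarrow> complex) \<Rightarrow> complex \<Rightarrow> complex \<Rightarrow> complex \<Rightarrow> complex^2^2" where
  "upper_tri_fun h p s q = mat2 (h p) (s * divdiff h p q) 0 (h q)"

lemma has_contour_integral_resolvent_upper_triangular:
  assumes "open U" and "h holomorphic_on U" and "encloses \<gamma> {p, q} U"
  shows "((\<lambda>w. h w * minv (mat w - mat2 p s 0 q) $ i $ k) has_contour_integral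
           2 * pi * \<i> * upper_tri_fun h p s q $ i $ k) \<gamma>"
proof -
  let ?R = "\<lambda>w. mat2 (1 / (w - p)) (s / ((w - p) * (w - q))) 0 (1 / (w - q))"
  have "((\<lambda>w. h w / (w - p)) has_contour_integral 2 * pi * \<i> * h p) \<gamma>"
   and "((\<lambda>w. h w / (w - q)) has_contour_integral 2 * pi * \<i> * h q) \<gamma>"
    by (rule Cauchy_integral_formula_encloses[OF assms]; simp)+
  moreover have "((\<lambda>w. s * (h w / ((w - p) * (w - q)))) has_contour_integral
                   s * (2 * pi * \<i> * divdiff h p q)) \<gamma>"
    by (intro has_contour_integral_lmul Cauchy_integral_formula_divdiff[OF assms]) simp_all
  ultimately have "\<forall>i k. ((\<lambda>w. h w * ?R w $ i $ k) has_contour_integral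
                     2 * pi * \<i> * upper_tri_fun h p s q $ i $ k) \<gamma>"
    unfolding forall_2
    by (simp add: upper_tri_fun_def has_contour_integral_0 mult.commute mult.left_commute)
  then have "((\<lambda>w. h w * ?R w $ i $ k) has_contour_integral
               2 * pi * \<i> * upper_tri_fun h p s q $ i $ k) \<gamma>"
    by blast
  then show ?thesis
  proof (rule has_contour_integral_eq)
    fix w assume "w \<in> path_image \<gamma>"
    with assms(3) have "w \<noteq> p" and "w \<noteq> q" by (auto simp: encloses_def)
    then show "h w * ?R w $ i $ k = h w * minv (mat w - mat2 p s 0 q) $ i $ k"
      by (simp add: minv_mat_minus_upper_triangular)
  qed
qed

lemma has_contour_integral_mult_resolvent_upper_triangular:
  assumes "open U" and "h holomorphic_on U" and "encloses \<gamma> {p, q} U"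
  shows "((\<lambda>w. h w * (M ** minv (mat w - mat2 p s 0 q)) $ i $ j) has_contour_integral
           2 * pi * \<i> * (M ** upper_tri_fun h p s q) $ i $ j) \<gamma>"
proof -
  let ?R = "\<lambda>w. minv (mat w - mat2 p s 0 q)"
  have "((\<lambda>w. \<Sum>l\<in>UNIV. M $ i $ l * (h w * ?R w $ l $ j)) has_contour_integral
          (\<Sum>l\<in>UNIV. M $ i $ l * (2 * pi * \<i> * upper_tri_fun h p s q $ l $ j))) \<gamma>"
    by (intro has_contour_integral_sum has_contour_integral_lmul
        has_contour_integral_resolvent_upper_triangular[OF assms]) simp
  then show ?thesis
    by (simp add: matrix_matrix_mult_def sum_distrib_left algebra_simps)
qed

lemma has_contour_integral_resolvent_mult_upper_triangular:
  fixes M :: "complex^2^2" and H :: "complex \<Rightarrow> complex^2^2"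
  assumes "open U" and "\<And>l j. (\<lambda>w. H w $ l $ j) holomorphic_on U" and "encloses \<gamma> {p, q} U"
  shows "((\<lambda>w. (minv (mat w - mat2 p s 0 q) ** M ** H w) $ i $ j) has_contour_integral
           2 * pi * \<i> * (\<Sum>k\<in>UNIV. \<Sum>l\<in>UNIV.
             M $ k $ l * upper_tri_fun (\<lambda>w. H w $ l $ j) p s q $ i $ k)) \<gamma>"
proof -
  let ?R = "\<lambda>w. minv (mat w - mat2 p s 0 q)"
  have "((\<lambda>w. \<Sum>k\<in>UNIV. \<Sum>l\<in>UNIV. M $ k $ l * (H w $ l $ j * ?R w $ i $ k)) has_contour_integral
          (\<Sum>k\<in>UNIV. \<Sum>l\<in>UNIV. M $ k $ l *
             (2 * pi * \<i> * upper_tri_fun (\<lambda>w. H w $ l $ j) p s q $ i $ k))) \<gamma>"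
    by (intro has_contour_integral_sum has_contour_integral_lmul
        has_contour_integral_resolvent_upper_triangular[OF assms(1,2,3)]) simp_all
  then show ?thesis
    by (simp add: matrix_matrix_mult_def sum_2 algebra_simps)
qed

lemma continuous_on_contour_integral_param:
  assumes "valid_path g" and "continuous_on {0..1} (\<lambda>t. vector_derivative g (at t))"
    and "continuous_on (U \<times> path_image g) (\<lambda>(x, y). F x y)"
  shows "continuous_on U (\<lambda>x. contour_integral g (F x))"
proof -
  have g: "continuous_on {0..1} g"
    using assms(1) valid_path_imp_path path_def by blast
  have "continuous_on (U \<times> {0..1}) (\<lambda>p. (fst p, g (snd p)))"
    by (intro continuous_intros continuous_on_compose2[OF g]) auto
  moreover have "(\<lambda>p. (fst p, g (snd p))) ` (U \<times> {0..1}) \<subseteq> U \<times> path_image g"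
    by (auto simp: path_image_def)
  ultimately have "continuous_on (U \<times> {0..1}) (\<lambda>p. (\<lambda>(x, y). F x y) (fst p, g (snd p)))"
    by (rule continuous_on_compose2[OF assms(3)])
  moreover have "continuous_on (U \<times> {0..1}) (\<lambda>p. vector_derivative g (at (snd p)))"
    by (intro continuous_on_compose2[OF assms(2)]) (auto intro: continuous_intros)
  ultimately have "continuous_on (U \<times> cbox 0 1) (\<lambda>(x, t). F x (g t) * vector_derivative g (at t))"
    using continuous_on_mult by (simp add: case_prod_beta cbox_interval)
  then have "continuous_on U (\<lambda>x. integral (cbox 0 1) (\<lambda>t. F x (g t) * vector_derivative g (at t)))"
    by (rule integral_continuous_on_param)
  then show ?thesis
    by (simp add: contour_integral_integral cbox_interval)
qed

lemma continuous_on_vector_derivative_circlepath: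
  "continuous_on {0..1} (\<lambda>t. vector_derivative (circlepath z r) (at t))"
  by (simp add: vector_derivative_circlepath) (intro continuous_intros)

lemma contour_integral_swap_linepath_circlepath:
  assumes "continuous_on (U \<times> path_image (circlepath z r)) (\<lambda>(x, y). F x y)"
    and "closed_segment a b \<subseteq> U"
  shows "contour_integral (linepath a b) (\<lambda>x. contour_integral (circlepath z r) (F x)) =
           contour_integral (circlepath z r) (\<lambda>y. contour_integral (linepath a b) (\<lambda>x. F x y))"
    and "(\<lambda>y. contour_integral (linepath a b) (\<lambda>x. F x y)) contour_integrable_on circlepath z r"
proof -
  have F: "continuous_on (path_image (linepath a b) \<times> path_image (circlepath z r)) (\<lambda>(x, y). F x y)"
    using assms by (auto intro: continuous_on_subset)
  then show "contour_integral (linepath a b) (\<lambda>x. contour_integral (circlepath z r) (F x)) =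
               contour_integral (circlepath z r) (\<lambda>y. contour_integral (linepath a b) (\<lambda>x. F x y))"
    by (rule contour_integral_swap)
      (auto intro!: continuous_intros continuous_on_vector_derivative_circlepath)
  have "continuous_on (path_image (circlepath z r) \<times> path_image (linepath a b)) (\<lambda>(y, x). F x y)"
    using continuous_on_swap_args[OF F] by simp
  then have "continuous_on (path_image (circlepath z r)) (\<lambda>y. contour_integral (linepath a b) (\<lambda>x. F x y))"
    by (rule continuous_on_contour_integral_param[OF valid_path_linepath, rotated])
      (auto intro!: continuous_intros)
  then show "(\<lambda>y. contour_integral (linepath a b) (\<lambda>x. F x y)) contour_integrable_on circlepath z r"
    by (rule contour_integrable_continuous_circlepath)
qed

lemma contour_integral_triangle_param_circlepath:
  assumes "open U"
    and "continuous_on (U \<times> path_image (circlepath z r)) (\<lambda>(x, y). F x y)"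
    and "\<And>y. y \<in> path_image (circlepath z r) \<Longrightarrow> (\<lambda>x. F x y) holomorphic_on U"
    and "convex hull {a, b, c} \<subseteq> U"
  defines "G \<equiv> \<lambda>x. contour_integral (circlepath z r) (F x)"
  shows "contour_integral (linepath a b) G + contour_integral (linepath b c) G
           + contour_integral (linepath c a) G = 0"
proof -
  let ?I = "\<lambda>p q y. contour_integral (linepath p q) (\<lambda>x. F x y)"
  have segs: "closed_segment a b \<subseteq> U" "closed_segment b c \<subseteq> U" "closed_segment c a \<subseteq> U"
    using assms(4) segments_subset_convex_hull by (meson order_trans)+
  have "?I a b y + (?I b c y + ?I c a y) = 0" if y: "y \<in> path_image (circlepath z r)" for y
  proof -
    have "(\<lambda>x. F x y) contour_integrable_on linepath p q" if "closed_segment p q \<subseteq> U" for p q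
      using assms(1) assms(3)[OF y] that by (auto intro!: contour_integrable_holomorphic_simple)
    then have "?I a b y + (?I b c y + ?I c a y) =
                 contour_integral (linepath a b +++ linepath b c +++ linepath c a) (\<lambda>x. F x y)"
      using segs by (simp add: contour_integrable_joinI)
    also have "\<dots> = 0"
      using assms(3)[OF y] assms(4)
      by (intro contour_integral_unique Cauchy_theorem_triangle) (rule holomorphic_on_subset)
    finally show ?thesis .
  qed
  then have "contour_integral (circlepath z r) (\<lambda>y. ?I a b y + (?I b c y + ?I c a y)) = 0"
    by (rule contour_integral_eq_0)
  then show ?thesis
    using contour_integral_swap_linepath_circlepath[OF assms(2) segs(1)]
      contour_integral_swap_linepath_circlepath[OF assms(2) segs(2)]
      contour_integral_swap_linepath_circlepath[OF assms(2) segs(3)]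
    by (simp add: G_def contour_integrable_add contour_integral_add add_ac)
qed

lemma holomorphic_on_contour_integral_param_circlepath:
  assumes "open U"
    and "continuous_on (U \<times> path_image (circlepath z r)) (\<lambda>(x, y). F x y)"
    and "\<And>y. y \<in> path_image (circlepath z r) \<Longrightarrow> (\<lambda>x. F x y) holomorphic_on U"
  shows "(\<lambda>x. contour_integral (circlepath z r) (F x)) holomorphic_on U"
proof -
  have "continuous_on U (\<lambda>x. contour_integral (circlepath z r) (F x))"
    by (rule continuous_on_contour_integral_param[OF valid_path_circlepath
          continuous_on_vector_derivative_circlepath assms(2)])
  then have "(\<lambda>x. contour_integral (circlepath z r) (F x)) analytic_on U"
    using assms contour_integral_triangle_param_circlepath by (intro Morera_triangle) blast+
  then show ?thesis
    by (rule analytic_imp_holomorphic)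
qed

lemma analytic2_on_holomorphic_fst:
  assumes "analytic2_on f (U \<times> V)" and "y \<in> V"
  shows "(\<lambda>x. f x y) holomorphic_on U"
  using assms unfolding analytic2_on_def holomorphic_on_def
  by (fastforce intro: field_differentiable_at_within)

lemma analytic2_on_holomorphic_snd:
  assumes "analytic2_on f (U \<times> V)" and "x \<in> U"
  shows "f x holomorphic_on V"
  using assms unfolding analytic2_on_def holomorphic_on_def
  by (fastforce intro: field_differentiable_at_within)

lemma holomorphic_on_deriv_snd:
  assumes "open U" and "open V" and "analytic2_on f (U \<times> V)" and "y \<in> V"
  shows "(\<lambda>x. deriv (f x) y) holomorphic_on U"
proof -
  obtain r where "r > 0" and r: "cball y r \<subseteq> V"
    using assms(2,4) open_contains_cball by blast
  define F where "F = (\<lambda>x u. f x u / (u - y)^2)"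
  have circle: "path_image (circlepath y r) \<subseteq> V - {y}"
    using \<open>r > 0\<close> r by (auto simp: path_image_circlepath_nonneg)
  have deriv_eq: "deriv (f x) y = 1 / (2 * of_real pi * \<i>) * contour_integral (circlepath y r) (F x)"
    if "x \<in> U" for x
  proof -
    have hol: "f x holomorphic_on V"
      using assms(3) that by (rule analytic2_on_holomorphic_snd)
    have "(f x has_field_derivative 1 / (2 * of_real pi * \<i>) * contour_integral (circlepath y r) (F x)) (at y)"
      unfolding F_def using \<open>r > 0\<close> r
      by (intro Cauchy_derivative_integral_circlepath holomorphic_on_imp_continuous_on
          holomorphic_on_subset[OF hol]) auto
    then show ?thesis
      by (rule DERIV_imp_deriv)
  qed
  have "continuous_on (U \<times> path_image (circlepath y r)) (\<lambda>(x, u). f x u)"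
    using assms(3) circle unfolding analytic2_on_def by (blast intro: continuous_on_subset)
  then have "continuous_on (U \<times> path_image (circlepath y r)) (\<lambda>(x, u). F x u)"
    using circle unfolding F_def case_prod_beta by (intro continuous_intros) auto
  moreover have "(\<lambda>x. F x u) holomorphic_on U" if "u \<in> path_image (circlepath y r)" for u
    using that circle unfolding F_def
    by (auto intro!: holomorphic_intros analytic2_on_holomorphic_fst[OF assms(3)])
  ultimately have "(\<lambda>x. 1 / (2 * of_real pi * \<i>) * contour_integral (circlepath y r) (F x)) holomorphic_on U"
    by (intro holomorphic_intros holomorphic_on_contour_integral_param_circlepath assms(1))
  then show ?thesis
    by (rule holomorphic_transform) (simp add: deriv_eq)
qed

lemma holomorphic_on_Dy:
  assumes "open U" and "open V" and "analytic2_on f (U \<times> V)" and "m1 \<in> V" and "m2 \<in> V"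
  shows "Dy f m1 m2 holomorphic_on U"
proof (cases "m1 = m2")
  case True
  then have "Dy f m1 m2 = (\<lambda>x. deriv (f x) m1)"
    by (simp add: fun_eq_iff Dy_def divdiff_def)
  then show ?thesis
    using holomorphic_on_deriv_snd[OF assms(1-4)] by simp
next
  case False
  then have "Dy f m1 m2 = (\<lambda>x. (f x m2 - f x m1) / (m2 - m1))"
    by (simp add: fun_eq_iff Dy_def divdiff_def)
  then show ?thesis
    using analytic2_on_holomorphic_fst[OF assms(3)] assms(4,5) False
    by (auto intro!: holomorphic_intros)
qed

lemma holomorphic_on_upper_tri_fun_snd:
  assumes "open U" and "open V" and "analytic2_on f (U \<times> V)" and "m1 \<in> V" and "m2 \<in> V"
  shows "(\<lambda>x. upper_tri_fun (f x) m1 s m2 $ l $ j) holomorphic_on U"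
proof -
  have "\<forall>l j. (\<lambda>x. upper_tri_fun (f x) m1 s m2 $ l $ j) holomorphic_on U"
    using analytic2_on_holomorphic_fst[OF assms(3)] holomorphic_on_Dy[OF assms] assms(4,5)
    unfolding forall_2 upper_tri_fun_def Dy_def by (auto intro!: holomorphic_intros)
  then show ?thesis by blast
qed

lemma bivar_fun_upper_triangular:
  assumes "open UA" and "open UB" and "analytic2_on f (UA \<times> UB)"
    and "encloses gA {l1, l2} UA" and "encloses gB {m1, m2} UB"
  shows "bivar_fun f (mat2 l1 a12 0 l2) (mat2 m1 b12 0 m2) C gA gB $ i $ j =
           (\<Sum>k\<in>UNIV. \<Sum>l\<in>UNIV. C $ k $ l *
              upper_tri_fun (\<lambda>x. upper_tri_fun (f x) m1 b12 m2 $ l $ j) l1 a12 l2 $ i $ k)"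
proof -
  let ?RA = "\<lambda>x. minv (mat x - mat2 l1 a12 0 l2)"
  let ?G = "\<lambda>x. upper_tri_fun (f x) m1 b12 m2"
  let ?S = "\<Sum>k\<in>UNIV. \<Sum>l\<in>UNIV. C $ k $ l * upper_tri_fun (\<lambda>x. ?G x $ l $ j) l1 a12 l2 $ i $ k"
  have inner: "contour_integral gB (\<lambda>y. f x y * (?RA x ** C ** minv (mat y - mat2 m1 b12 0 m2)) $ i $ j)
                 = 2 * pi * \<i> * (?RA x ** C ** ?G x) $ i $ j"
    if "x \<in> path_image gA" for x
  proof -
    have "x \<in> UA"
      using assms(4) that by (auto simp: encloses_def)
    then show ?thesis
      by (intro contour_integral_unique has_contour_integral_mult_resolvent_upper_triangular[OF
            assms(2) analytic2_on_holomorphic_snd[OF assms(3)] assms(5)])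
  qed
  have "((\<lambda>x. 2 * pi * \<i> * (?RA x ** C ** ?G x) $ i $ j) has_contour_integral
           2 * pi * \<i> * (2 * pi * \<i> * ?S)) gA"
    using assms encloses_subset[OF assms(5)]
    by (intro has_contour_integral_lmul has_contour_integral_resolvent_mult_upper_triangular
        holomorphic_on_upper_tri_fun_snd) auto
  then have "contour_integral gA (\<lambda>x. contour_integral gB
               (\<lambda>y. f x y * (?RA x ** C ** minv (mat y - mat2 m1 b12 0 m2)) $ i $ j))
             = (2 * pi * \<i>)^2 * ?S"
    by (simp add: contour_integral_eq[OF inner] contour_integral_unique power2_eq_square)
  then show ?thesis
    by (simp add: bivar_fun_def power_divide)
qed

theorem corollary2p3:
  fixes l1 l2 a12 m1 m2 b12 c11 c12 c21 c22 :: complex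
    and f :: "complex \<Rightarrow> complex \<Rightarrow> complex"
    and UA UB :: "complex set" and gA gB :: "real \<Rightarrow> complex"
  defines "A \<equiv> mat2 l1 a12 0 l2"
      and "B \<equiv> mat2 m1 b12 0 m2"
      and "C \<equiv> mat2 c11 c12 c21 c22"
  assumes "open UA" and "open UB"
      and "mspectrum A \<subseteq> UA" and "mspectrum B \<subseteq> UB"
      and "analytic2_on f (UA \<times> UB)"
      and "encloses gA (mspectrum A) UA" and "encloses gB (mspectrum B) UB"
  shows "bivar_fun f A B C gA gB =
     hadamard (mat2 (f l1 m1) (f l1 m2) (f l2 m1) (f l2 m2)) C +
     mat2 (c21 * a12 * Dx f l1 l2 m1)
          (c22 * a12 * Dx f l1 l2 m2 + c11 * b12 * Dy f m1 m2 l1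
             + c21 * a12 * b12 * divdiff (\<lambda>x. Dy f m1 m2 x) l1 l2)
          0
          (c21 * b12 * Dy f m1 m2 l2)"
proof -
  have encA: "encloses gA {l1, l2} UA" and encB: "encloses gB {m1, m2} UB"
    using assms(9,10) by (simp_all add: A_def B_def mspectrum_upper_triangular)
  then have "l1 \<in> UA" and "m1 \<in> UB" and "m2 \<in> UB"
    using encloses_subset by blast+
  then have "Dy f m1 m2 field_differentiable at l1"
    using holomorphic_on_Dy[OF assms(4,5,8)] assms(4) holomorphic_on_imp_differentiable_at by blast
  then show ?thesis
    using bivar_fun_upper_triangular[OF assms(4,5,8) encA encB]
    unfolding A_def B_def C_def vec_eq_iff forall_2
    by (simp add: sum_2 upper_tri_fun_def hadamard_def Dx_def Dy_def[symmetric] divdiff_cmult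
        algebra_simps)
qed

end
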